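(* Let $\mathfrak K$ be a cone of $\mathbb R^d$-valued predictable $S$-integrable processes (i.e. $\vartheta\in\mathfrak K$, $c\ge 0$ imply $c\vartheta\in\mathfrak K$) such that $\vartheta\cdot S_T\in L^2(P)$ for all $\vartheta\in\mathfrak K$. Let $\tilde\varphi\in\mathfrak K$ be a solution of the problem $$\text{minimise } E\big[|1-\vartheta\cdot S_T|^2\big] \text{ over } \vartheta\in\mathfrak K,$$ and assume $\tilde\varphi\cdot S_T\not\equiv 1$ and $E[\tilde\varphi\cdot S_T]>0$. Then, for $\gamma>0$, the strategy $$\tilde\vartheta=\frac{1}{\gamma}\,\frac{1}{E[1-\tilde\varphi\cdot S_T]}\,\tilde\varphi$$ solves the problem: maximise $E[V_T(x,\vartheta)]-\frac{\gamma}{2}\mathrm{Var}[V_T(x,\vartheta)]$ over $\vartheta\in\mathfrak K$; and for $m>x$ the strategy $$\tilde\vartheta^{(m,x)}=\frac{m-x}{E[\tilde\varphi\cdot S_T]}\,\tilde\varphi$$ solves the problem: minimise $\mathrm{Var}[V_T(x,\vartheta)]$ subject to $E[V_T(x,\vartheta)]=m$ and $\vartheta\in\mathfrak K$.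
   Context: $(\Omega,\mathcal F,P)$ is a probability space with a filtration $(\mathcal F_t)_{0\le t\le T}$ satisfying the usual conditions, $T>0$ fixed. $S$ is an $\mathbb R^d$-valued RCLL semimartingale (discounted prices of $d$ risky assets; the riskless asset has price $1$). For $x\in\mathbb R$ and an $S$-integrable predictable $\vartheta$, $V_t(x,\vartheta):=x+\int_0^t\vartheta_u\,dS_u=x+\vartheta\cdot S_t$. *)

theory Defs
  imports "HOL-Probability.Probability"
begin

text \<open>Abstract setting: strategies are elements of a real vector space of processes;
  G th is the terminal gain th . S_T (a random variable on M).
  Terminal wealth V_T(x,th) = x + th . S_T.\<close>

definition wealth :: "real \<Rightarrow> ('p \<Rightarrow> 'a \<Rightarrow> real) \<Rightarrow> 'p \<Rightarrow> 'a \<Rightarrow> real" where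
  "wealth x G th = (\<lambda>\<omega>. x + G th \<omega>)"

definition cone :: "'p::real_vector set \<Rightarrow> bool" where
  "cone K \<longleftrightarrow> (\<forall>th\<in>K. \<forall>c::real. c \<ge> 0 \<longrightarrow> c *\<^sub>R th \<in> K)"

end

theory Submission imports Defs begin

(*
  Write mu th = E[G th] and s th = E[(G th)^2] for the mean and second moment of the
  gain of a strategy th.  Since K is a cone and G is positively homogeneous, optimality
  of phi for E[(1 - G th)^2] = 1 - 2 mu th + s th says that the quadratic
  c |-> 1 - 2 c mu th + c^2 s th on c >= 0 never drops below its value at phi.
  Minimising over c gives mu th^2 <= s th * (2 a - b) with a = mu phi, b = s phi;
  for th = phi this forces a = b, and then 0 < a < 1.  Hence every strategy with
  positive mean gain has Var[V_T] = s th - mu th^2 >= mu th^2 (1 - a) / a, with equality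
  for the multiples of phi.  Both optimisation problems reduce to this bound.
*)

lemma (in prob_space) square_integrable_moments:
  fixes X :: "'a \<Rightarrow> real"
  assumes [measurable]: "X \<in> borel_measurable M" and sq: "integrable M (\<lambda>w. (X w)\<^sup>2)"
  shows "expectation (\<lambda>w. x + X w) = x + expectation X"
    and "expectation (\<lambda>w. x - X w) = x - expectation X"
    and "variance (\<lambda>w. x + X w) = expectation (\<lambda>w. (X w)\<^sup>2) - (expectation X)\<^sup>2"
    and "expectation (\<lambda>w. (1 - X w)\<^sup>2) = 1 - 2 * expectation X + expectation (\<lambda>w. (X w)\<^sup>2)"
    and "(expectation X)\<^sup>2 \<le> expectation (\<lambda>w. (X w)\<^sup>2)"
proof -
  have int: "integrable M X" by (rule square_integrable_imp_integrable[OF assms])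
  show mean: "expectation (\<lambda>w. x + X w) = x + expectation X"
    using int by (simp add: prob_space)
  show "expectation (\<lambda>w. x - X w) = x - expectation X"
    using int by (simp add: prob_space)
  have centred: "(\<lambda>w. (x + X w - (x + expectation X))\<^sup>2)
      = (\<lambda>w. (X w)\<^sup>2 - (2 * expectation X) * X w + (expectation X)\<^sup>2)"
    by (auto simp: power2_eq_square algebra_simps)
  show var: "variance (\<lambda>w. x + X w) = expectation (\<lambda>w. (X w)\<^sup>2) - (expectation X)\<^sup>2"
    unfolding mean centred using int sq by (simp add: prob_space power2_eq_square)
  have error: "(\<lambda>w. (1 - X w)\<^sup>2) = (\<lambda>w. 1 - 2 * X w + (X w)\<^sup>2)"
    by (auto simp: power2_eq_square algebra_simps)
  show "expectation (\<lambda>w. (1 - X w)\<^sup>2) = 1 - 2 * expectation X + expectation (\<lambda>w. (X w)\<^sup>2)"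
    unfolding error using int sq by (simp add: prob_space)
  have "0 \<le> variance (\<lambda>w. x + X w)" by (simp add: integral_nonneg_AE)
  then show "(expectation X)\<^sup>2 \<le> expectation (\<lambda>w. (X w)\<^sup>2)" using var by simp
qed

lemma (in prob_space) mean_square_distance_pos:
  fixes X :: "'a \<Rightarrow> real"
  assumes [measurable]: "X \<in> borel_measurable M" and sq: "integrable M (\<lambda>w. (X w)\<^sup>2)"
    and not1: "\<not> (AE w in M. X w = 1)"
  shows "0 < expectation (\<lambda>w. (1 - X w)\<^sup>2)"
proof -
  have int: "integrable M (\<lambda>w. (1 - X w)\<^sup>2)"
    using square_integrable_imp_integrable[OF assms(1,2)] sq by (simp add: power2_diff)
  have "\<not> (AE w in M. (1 - X w)\<^sup>2 = 0)"
    using not1 by (auto elim: AE_mp)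
  then have "expectation (\<lambda>w. (1 - X w)\<^sup>2) \<noteq> 0"
    using integral_nonneg_eq_0_iff_AE[OF int] by simp
  moreover have "0 \<le> expectation (\<lambda>w. (1 - X w)\<^sup>2)" by (simp add: integral_nonneg_AE)
  ultimately show ?thesis by linarith
qed

text \<open>Minimising c \<mapsto> 1 - 2 c \<mu> + c^2 s over c \<ge> 0 (attained at c = \<mu>/s):
  a lower bound r for this quadratic yields \<mu>^2 \<le> s (1 - r).\<close>

lemma quadratic_lower_bound:
  fixes r \<mu> s :: real
  assumes bound: "\<And>c. c \<ge> 0 \<Longrightarrow> r \<le> 1 - 2 * c * \<mu> + c\<^sup>2 * s"
    and pos: "\<mu> > 0" and cs: "\<mu>\<^sup>2 \<le> s"
  shows "\<mu>\<^sup>2 \<le> s * (1 - r)"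
proof -
  have "0 < \<mu>\<^sup>2" using pos by simp
  then have s: "s > 0" using cs by linarith
  have "r \<le> 1 - 2 * (\<mu> / s) * \<mu> + (\<mu> / s)\<^sup>2 * s"
    using bound[of "\<mu> / s"] pos s by simp
  also have "\<dots> = 1 - \<mu>\<^sup>2 / s" using s by (simp add: power2_eq_square field_simps)
  finally show ?thesis using s by (simp add: field_simps)
qed

lemma concave_quadratic_max:
  fixes q \<mu> :: real
  assumes q: "q > 0"
  shows "\<mu> - q / 2 * \<mu>\<^sup>2 \<le> 1 / (2 * q)"
proof -
  have "0 \<le> (q * \<mu> - 1)\<^sup>2" by simp
  then have "2 * q * \<mu> - q\<^sup>2 * \<mu>\<^sup>2 \<le> 1" by (simp add: power2_eq_square algebra_simps)
  then show ?thesis using q by (simp add: field_simps power2_eq_square)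
qed

locale quadratic_hedging = prob_space M for M :: "'a measure" +
  fixes K :: "'p::real_vector set" and G :: "'p \<Rightarrow> 'a \<Rightarrow> real" and phi :: 'p
  assumes coneK: "cone K"
    and G_hom: "\<forall>th\<in>K. \<forall>c::real. c \<ge> 0 \<longrightarrow> (AE \<omega> in M. G (c *\<^sub>R th) \<omega> = c * G th \<omega>)"
    and L2: "\<forall>th\<in>K. G th \<in> borel_measurable M \<and> integrable M (\<lambda>\<omega>. (G th \<omega>)\<^sup>2)"
    and phiK: "phi \<in> K"
    and phi_opt: "\<forall>th\<in>K. expectation (\<lambda>\<omega>. (1 - G phi \<omega>)\<^sup>2)
                            \<le> expectation (\<lambda>\<omega>. (1 - G th \<omega>)\<^sup>2)"
    and phi_not1: "\<not> (AE \<omega> in M. G phi \<omega> = 1)"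
    and phi_pos: "expectation (G phi) > 0"
begin

definition gain_mean :: "'p \<Rightarrow> real" where
  "gain_mean th = expectation (G th)"

definition gain_moment2 :: "'p \<Rightarrow> real" where
  "gain_moment2 th = expectation (\<lambda>w. (G th w)\<^sup>2)"

lemma gain_measurable: "th \<in> K \<Longrightarrow> G th \<in> borel_measurable M"
  and gain_square_integrable: "th \<in> K \<Longrightarrow> integrable M (\<lambda>w. (G th w)\<^sup>2)"
  using L2 by auto

lemma cone_scale: "th \<in> K \<Longrightarrow> c \<ge> 0 \<Longrightarrow> c *\<^sub>R th \<in> K"
  using coneK unfolding cone_def by blast

lemma gain_moments_scale:
  assumes th: "th \<in> K" and c: "c \<ge> 0"
  shows "gain_mean (c *\<^sub>R th) = c * gain_mean th"
    and "gain_moment2 (c *\<^sub>R th) = c\<^sup>2 * gain_moment2 th"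
proof -
  have ae: "AE w in M. G (c *\<^sub>R th) w = c * G th w" using G_hom th c by blast
  note meas = gain_measurable[OF th] gain_measurable[OF cone_scale[OF th c]]
  have "gain_mean (c *\<^sub>R th) = expectation (\<lambda>w. c * G th w)"
    unfolding gain_mean_def using ae meas by (intro integral_cong_AE) auto
  then show "gain_mean (c *\<^sub>R th) = c * gain_mean th" by (simp add: gain_mean_def)
  have "gain_moment2 (c *\<^sub>R th) = expectation (\<lambda>w. c\<^sup>2 * (G th w)\<^sup>2)"
    unfolding gain_moment2_def using ae meas
    by (intro integral_cong_AE) (auto simp: power_mult_distrib)
  then show "gain_moment2 (c *\<^sub>R th) = c\<^sup>2 * gain_moment2 th" by (simp add: gain_moment2_def)
qed

lemma hedging_error:
  "th \<in> K \<Longrightarrow> expectation (\<lambda>w. (1 - G th w)\<^sup>2) = 1 - 2 * gain_mean th + gain_moment2 th"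
  using square_integrable_moments(4)[OF gain_measurable gain_square_integrable]
  unfolding gain_mean_def gain_moment2_def by simp

lemma gain_mean_sq_le: "th \<in> K \<Longrightarrow> (gain_mean th)\<^sup>2 \<le> gain_moment2 th"
  using square_integrable_moments(5)[OF gain_measurable gain_square_integrable]
  unfolding gain_mean_def gain_moment2_def by simp

lemma wealth_expectation: "th \<in> K \<Longrightarrow> expectation (wealth x G th) = x + gain_mean th"
  using square_integrable_moments(1)[OF gain_measurable gain_square_integrable]
  unfolding wealth_def gain_mean_def by simp

lemma wealth_variance:
  "th \<in> K \<Longrightarrow> variance (wealth x G th) = gain_moment2 th - (gain_mean th)\<^sup>2"
  using square_integrable_moments(1,3)[OF gain_measurable gain_square_integrable]
  unfolding wealth_def gain_mean_def gain_moment2_def by simp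

lemma phi_ray_optimality:
  assumes th: "th \<in> K" and c: "c \<ge> 0"
  shows "1 - 2 * gain_mean phi + gain_moment2 phi
         \<le> 1 - 2 * c * gain_mean th + c\<^sup>2 * gain_moment2 th"
  using phi_opt cone_scale[OF th c] hedging_error[OF phiK] hedging_error[OF cone_scale[OF th c]]
    gain_moments_scale[OF th c] by auto

lemma second_moment_bound:
  assumes th: "th \<in> K" and pos: "gain_mean th > 0"
  shows "(gain_mean th)\<^sup>2 \<le> gain_moment2 th * (2 * gain_mean phi - gain_moment2 phi)"
  using quadratic_lower_bound[OF phi_ray_optimality[OF th] pos gain_mean_sq_le[OF th]] by simp

lemma phi_mean_eq_moment2: "gain_mean phi = gain_moment2 phi"
proof -
  have "(gain_mean phi)\<^sup>2 \<le> gain_moment2 phi * (2 * gain_mean phi - gain_moment2 phi)"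
    using second_moment_bound[OF phiK] phi_pos by (simp add: gain_mean_def)
  then have "(gain_mean phi - gain_moment2 phi)\<^sup>2 \<le> 0"
    by (simp add: power2_eq_square algebra_simps)
  then show ?thesis by simp
qed

lemma phi_mean_bounds: "0 < gain_mean phi" "gain_mean phi < 1"
proof -
  show pos: "0 < gain_mean phi" using phi_pos by (simp add: gain_mean_def)
  have "0 < expectation (\<lambda>w. (1 - G phi w)\<^sup>2)"
    using mean_square_distance_pos[OF gain_measurable[OF phiK] gain_square_integrable[OF phiK]
        phi_not1] .
  then show "gain_mean phi < 1"
    using hedging_error[OF phiK] phi_mean_eq_moment2 by simp
qed

lemma variance_lower_bound:
  assumes th: "th \<in> K" and pos: "gain_mean th > 0"
  shows "(gain_mean th)\<^sup>2 * (1 - gain_mean phi) / gain_mean phi \<le> variance (wealth x G th)"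
proof -
  have "(gain_mean th)\<^sup>2 \<le> gain_moment2 th * gain_mean phi"
    using second_moment_bound[OF th pos] phi_mean_eq_moment2 by simp
  then have "(gain_mean th)\<^sup>2 * (1 - gain_mean phi)
             \<le> (gain_moment2 th - (gain_mean th)\<^sup>2) * gain_mean phi"
    by (simp add: algebra_simps)
  then show ?thesis
    using phi_mean_bounds(1) wealth_variance[OF th] by (simp add: pos_divide_le_eq)
qed

lemma scaled_phi_moments:
  assumes c: "c \<ge> 0"
  shows "expectation (wealth x G (c *\<^sub>R phi)) = x + c * gain_mean phi"
    and "variance (wealth x G (c *\<^sub>R phi)) = c\<^sup>2 * gain_mean phi * (1 - gain_mean phi)"
proof -
  note scaled = gain_moments_scale[OF phiK c] and cK = cone_scale[OF phiK c]
  show "expectation (wealth x G (c *\<^sub>R phi)) = x + c * gain_mean phi"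
    using wealth_expectation[OF cK] scaled by simp
  have "variance (wealth x G (c *\<^sub>R phi)) = c\<^sup>2 * gain_moment2 phi - (c * gain_mean phi)\<^sup>2"
    using wealth_variance[OF cK, of x] scaled by simp
  also have "\<dots> = c\<^sup>2 * gain_mean phi * (1 - gain_mean phi)"
    using phi_mean_eq_moment2 by (simp add: power2_eq_square algebra_simps)
  finally show "variance (wealth x G (c *\<^sub>R phi)) = c\<^sup>2 * gain_mean phi * (1 - gain_mean phi)" .
qed

lemma mean_variance_optimal:
  assumes g: "gamma > 0"
  defines "th' \<equiv> ((1 / gamma) * (1 / expectation (\<lambda>\<omega>. 1 - G phi \<omega>))) *\<^sub>R phi"
  shows "th' \<in> K"
    and "th \<in> K \<Longrightarrow> expectation (wealth x G th) - gamma / 2 * variance (wealth x G th)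
                    \<le> expectation (wealth x G th') - gamma / 2 * variance (wealth x G th')"
proof -
  define a where "a = gain_mean phi"
  have a: "0 < a" "a < 1" using phi_mean_bounds unfolding a_def by auto
  define c where "c = (1 / gamma) * (1 / (1 - a))"
  have "expectation (\<lambda>\<omega>. 1 - G phi \<omega>) = 1 - a"
    using square_integrable_moments(2)[OF gain_measurable[OF phiK] gain_square_integrable[OF phiK]]
    unfolding a_def gain_mean_def by simp
  then have th': "th' = c *\<^sub>R phi" unfolding th'_def c_def by simp
  have c: "c > 0" using g a by (simp add: c_def)
  then show "th' \<in> K" using th' cone_scale[OF phiK] by simp
  define q where "q = gamma * (1 - a) / a"
  have q: "q > 0" using g a by (simp add: q_def)
  have "expectation (wealth x G th') - gamma / 2 * variance (wealth x G th')
        = x + c * a - gamma / 2 * (c\<^sup>2 * a * (1 - a))"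
    unfolding th' using scaled_phi_moments[OF less_imp_le[OF c]] by (simp add: a_def)
  also have "\<dots> = x + c * a - (c * gamma * (1 - a)) * (c * a) / 2"
    by (simp add: power2_eq_square field_simps)
  also have "\<dots> = x + 1 / (2 * q)"
    using g a by (simp add: c_def q_def)
  finally have value_th': "expectation (wealth x G th') - gamma / 2 * variance (wealth x G th')
                   = x + 1 / (2 * q)" .
  assume th: "th \<in> K"
  show "expectation (wealth x G th) - gamma / 2 * variance (wealth x G th)
        \<le> expectation (wealth x G th') - gamma / 2 * variance (wealth x G th')"
  proof (cases "gain_mean th > 0")
    case False
    have "0 \<le> gamma / 2 * variance (wealth x G th)"
      using g gain_mean_sq_le[OF th] wealth_variance[OF th] by simp
    moreover have "0 < 1 / (2 * q)" using q by simp
    ultimately show ?thesis using False value_th' wealth_expectation[OF th, of x] by linarith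
  next
    case True
    have "q / 2 * (gain_mean th)\<^sup>2 = gamma / 2 * ((gain_mean th)\<^sup>2 * (1 - a) / a)"
      by (simp add: q_def field_simps)
    also have "\<dots> \<le> gamma / 2 * variance (wealth x G th)"
      using mult_left_mono[OF variance_lower_bound[OF th True, of x], of "gamma / 2"] g
      unfolding a_def by simp
    finally show ?thesis
      using concave_quadratic_max[OF q, of "gain_mean th"] value_th' wealth_expectation[OF th, of x]
      by linarith
  qed
qed

lemma min_variance_optimal:
  assumes mx: "m > x"
  defines "th' \<equiv> ((m - x) / expectation (G phi)) *\<^sub>R phi"
  shows "th' \<in> K" and "expectation (wealth x G th') = m"
    and "th \<in> K \<Longrightarrow> expectation (wealth x G th) = m
           \<Longrightarrow> variance (wealth x G th') \<le> variance (wealth x G th)"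
proof -
  define a where "a = gain_mean phi"
  have a: "0 < a" "a < 1" using phi_mean_bounds unfolding a_def by auto
  define c where "c = (m - x) / a"
  have th': "th' = c *\<^sub>R phi" unfolding th'_def c_def a_def gain_mean_def ..
  have c: "c \<ge> 0" using mx a by (simp add: c_def)
  show "th' \<in> K" using th' cone_scale[OF phiK c] by simp
  show "expectation (wealth x G th') = m"
    unfolding th' using scaled_phi_moments(1)[OF c] a by (simp add: a_def c_def)
  have "variance (wealth x G th') = c\<^sup>2 * a * (1 - a)"
    unfolding th' using scaled_phi_moments(2)[OF c] by (simp add: a_def)
  also have "\<dots> = (m - x)\<^sup>2 * (1 - a) / a"
    using a by (simp add: c_def power2_eq_square field_simps)
  finally have var_th': "variance (wealth x G th') = (m - x)\<^sup>2 * (1 - a) / a" .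
  assume th: "th \<in> K" and "expectation (wealth x G th) = m"
  then have mean: "gain_mean th = m - x" using wealth_expectation[OF th] by simp
  show "variance (wealth x G th') \<le> variance (wealth x G th)"
    using variance_lower_bound[OF th] mean mx var_th' unfolding a_def by simp
qed

end

theorem lemma2p1:
  fixes M :: "'a measure" and K :: "'p::real_vector set"
    and G :: "'p \<Rightarrow> 'a \<Rightarrow> real" and phi :: 'p and x gamma m :: real
  assumes P: "prob_space M"
    and coneK: "cone K"
    and G_hom: "\<forall>th\<in>K. \<forall>c::real. c \<ge> 0 \<longrightarrow> (AE \<omega> in M. G (c *\<^sub>R th) \<omega> = c * G th \<omega>)"
    and L2: "\<forall>th\<in>K. G th \<in> borel_measurable M \<and> integrable M (\<lambda>\<omega>. (G th \<omega>)\<^sup>2)"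
    and phiK: "phi \<in> K"
    and phi_opt: "\<forall>th\<in>K. prob_space.expectation M (\<lambda>\<omega>. (1 - G phi \<omega>)\<^sup>2)
                            \<le> prob_space.expectation M (\<lambda>\<omega>. (1 - G th \<omega>)\<^sup>2)"
    and phi_not1: "\<not> (AE \<omega> in M. G phi \<omega> = 1)"
    and phi_pos: "prob_space.expectation M (G phi) > 0"
  shows "(gamma > 0 \<longrightarrow>
           (let th' = ((1 / gamma) * (1 / prob_space.expectation M (\<lambda>\<omega>. 1 - G phi \<omega>))) *\<^sub>R phi
            in th' \<in> K \<and>
               (\<forall>th\<in>K. prob_space.expectation M (wealth x G th)
                          - gamma / 2 * prob_space.variance M (wealth x G th)
                        \<le> prob_space.expectation M (wealth x G th')
                          - gamma / 2 * prob_space.variance M (wealth x G th'))))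
       \<and> (m > x \<longrightarrow>
           (let th' = ((m - x) / prob_space.expectation M (G phi)) *\<^sub>R phi
            in th' \<in> K \<and> prob_space.expectation M (wealth x G th') = m \<and>
               (\<forall>th\<in>K. prob_space.expectation M (wealth x G th) = m \<longrightarrow>
                  prob_space.variance M (wealth x G th') \<le> prob_space.variance M (wealth x G th))))"
proof -
  interpret quadratic_hedging M K G phi
    using P coneK G_hom L2 phiK phi_opt phi_not1 phi_pos
    by (simp add: quadratic_hedging_def quadratic_hedging_axioms_def)
  show ?thesis
    unfolding Let_def
    using mean_variance_optimal min_variance_optimal by blast
qed

end
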